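(* Let $\Gamma>0$ and $B\in\mathbb{R}$. For $N\in\mathbb{N}_+$ let \[ H_N^{\mathrm{CW}}=-\frac{\Gamma}{2N}\sum_{x,y=1}^{N}\sigma_3(x)\sigma_3(y)-B\sum_{x=1}^{N}\sigma_1(x) \] acting on $\bigotimes_{i=1}^N\mathbb{C}^2$ (a $2^N\times2^N$ real symmetric matrix), and let $\bar H_N^{\mathrm{CW}}=H_N^{\mathrm{CW}}/N$. Then $\{\bar H_N^{\mathrm{CW}}\}_N$ is a zero-distributed GLT sequence; in particular, for every continuous compactly supported $F:\mathbb{R}\to\mathbb{C}$, \[ \lim_{N\to\infty}\frac{1}{2^N}\sum_{j=1}^{2^N}F\big(\lambda_j(\bar H_N^{\mathrm{CW}})\big)=F(0), \] and the same holds with singular values in place of eigenvalues.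
   Context: Pauli matrices: $\sigma_1=\begin{pmatrix}0&1\\1&0\end{pmatrix}$, $\sigma_3=\begin{pmatrix}1&0\\0&-1\end{pmatrix}$. $\sigma_i(x)$ denotes the operator on $\bigotimes_{k=1}^N\mathbb{C}^2$ acting as $\sigma_i$ on the $x$-th tensor factor and as the $2\times2$ identity on the others. A matrix-sequence $\{A_N\}_N$ (with $A_N$ of size $d_N\to\infty$) is zero-distributed if $\lim_{N}\frac{1}{d_N}\sum_jF(\sigma_j(A_N))=F(0)$ for all $F\in C_c(\mathbb{R})$; zero-distributed sequences are exactly the GLT sequences with GLT symbol $0$. *)

theory Defs
  imports Complex_Main "Jordan_Normal_Form.Char_Poly" "HOL-Computational_Algebra.Polynomial"
begin

text \<open>Computational basis of the N-fold tensor product of C^2: index i in {0..<2^N};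
  tensor factor k (1 \<le> k \<le> N) is in basis state bit i (k-1), where bit i m = (i div 2^m) mod 2.\<close>

definition bit_of :: "nat \<Rightarrow> nat \<Rightarrow> nat" where
  "bit_of i m = (i div 2 ^ m) mod 2"

definition pauli1 :: "real mat" where
  "pauli1 = mat_of_rows_list 2 [[0, 1], [1, 0]]"

definition pauli3 :: "real mat" where
  "pauli3 = mat_of_rows_list 2 [[1, 0], [0, -1]]"

text \<open>sigma_at N x M: the operator acting as the 2x2 matrix M on the x-th tensor factor
  (1 \<le> x \<le> N) and as the identity on the others (entries of the Kronecker product).\<close>
definition sigma_at :: "nat \<Rightarrow> nat \<Rightarrow> real mat \<Rightarrow> real mat" where
  "sigma_at N x M = mat (2 ^ N) (2 ^ N) (\<lambda>(i, j).
      \<Prod>k\<in>{1..N}. (if k = x then M $$ (bit_of i (k - 1), bit_of j (k - 1))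
                    else (if bit_of i (k - 1) = bit_of j (k - 1) then 1 else 0)))"

definition H_CW :: "real \<Rightarrow> real \<Rightarrow> nat \<Rightarrow> real mat" where
  "H_CW \<Gamma> B N = mat (2 ^ N) (2 ^ N) (\<lambda>(i, j).
      - (\<Gamma> / (2 * real N)) * (\<Sum>x\<in>{1..N}. \<Sum>y\<in>{1..N}.
            (sigma_at N x pauli3 * sigma_at N y pauli3) $$ (i, j))
      - B * (\<Sum>x\<in>{1..N}. sigma_at N x pauli1 $$ (i, j)))"

definition Hbar_CW :: "real \<Rightarrow> real \<Rightarrow> nat \<Rightarrow> real mat" where
  "Hbar_CW \<Gamma> B N = (1 / real N) \<cdot>\<^sub>m H_CW \<Gamma> B N"

text \<open>Eigenvalues (with algebraic multiplicity) of a real matrix, as the multiset of real roots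
  of its characteristic polynomial (for real symmetric matrices these are all eigenvalues).\<close>
definition eigenvalues_mset :: "real mat \<Rightarrow> real multiset" where
  "eigenvalues_mset A = proots (char_poly A)"

definition singular_values_mset :: "real mat \<Rightarrow> real multiset" where
  "singular_values_mset A = image_mset sqrt (proots (char_poly (transpose_mat A * A)))"

definition Cc_fun :: "(real \<Rightarrow> complex) \<Rightarrow> bool" where
  "Cc_fun F \<longleftrightarrow> continuous_on UNIV F \<and> (\<exists>R. \<forall>t. \<bar>t\<bar> > R \<longrightarrow> F t = 0)"

end

theory Submission
  imports Defs "Jordan_Normal_Form.Schur_Decomposition"
begin

(* In the computational basis the Curie-Weiss Hamiltonian has diagonal entries
   -Gamma/(2N) m(i)^2, where m(i) is the magnetization of the basis state i, and off-diagonal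
   entries -B on pairs of states differing in exactly one spin. Orthogonality of the spin
   functions gives sum_i m(i)^2 = N 2^N, hence sum_i m(i)^4 <= N^3 2^N, and the hypercube has
   N 2^N directed edges; so the squared Frobenius norm of the normalized Hamiltonian is at most
   (Gamma^2/4 + B^2) 2^N / N. For a real symmetric matrix this norm is the sum of the squared
   eigenvalues (triangularize by Schur and compare traces of A^2), so the mean of lambda^2 over
   the 2^N eigenvalues tends to 0. A bounded F continuous at 0 satisfies
   |F t - F 0| <= eps + c t^2, whence the spectral averages of F tend to F 0. The singular values
   of a symmetric matrix are the moduli of its eigenvalues. *)

section \<open>Spectra of real symmetric matrices\<close>

definition mat_trace :: "'a :: comm_ring_1 mat \<Rightarrow> 'a" where
  "mat_trace A = (\<Sum>i<dim_row A. A $$ (i, i))"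

lemma mat_trace_mult_comm:
  assumes "A \<in> carrier_mat n m" "B \<in> carrier_mat m n"
  shows "mat_trace (A * B) = mat_trace (B * A)"
proof -
  have "mat_trace (A * B) = (\<Sum>i<n. \<Sum>k<m. A $$ (i, k) * B $$ (k, i))"
    using assms by (auto simp: mat_trace_def scalar_prod_def atLeast0LessThan intro: sum.cong)
  also have "\<dots> = (\<Sum>k<m. \<Sum>i<n. B $$ (k, i) * A $$ (i, k))"
    by (subst sum.swap) (simp add: mult.commute)
  also have "\<dots> = mat_trace (B * A)"
    using assms by (auto simp: mat_trace_def scalar_prod_def atLeast0LessThan intro: sum.cong)
  finally show ?thesis .
qed

lemma mat_trace_similar:
  assumes "similar_mat A B"
  shows "mat_trace A = mat_trace B"
proof -
  obtain n P Q where carrier: "{A, B, P, Q} \<subseteq> carrier_mat n n"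
    and inverse: "Q * P = 1\<^sub>m n" and A: "A = P * B * Q"
    using similar_matD[OF assms] by blast
  have "mat_trace A = mat_trace (Q * (P * B))"
    unfolding A by (rule mat_trace_mult_comm) (use carrier in auto)
  also have "Q * (P * B) = Q * P * B"
    using carrier by (subst assoc_mult_mat[of Q n n P n B n]) auto
  also have "\<dots> = B"
    using carrier inverse by auto
  finally show ?thesis .
qed

lemma mat_trace_transpose_mult_self:
  assumes "A \<in> carrier_mat n m"
  shows "mat_trace (transpose_mat A * A) = (\<Sum>i<n. \<Sum>j<m. (A $$ (i, j))\<^sup>2)"
proof -
  have "mat_trace (transpose_mat A * A) = (\<Sum>j<m. \<Sum>i<n. (A $$ (i, j))\<^sup>2)"
    using assms by (auto simp: mat_trace_def scalar_prod_def atLeast0LessThan power2_eq_square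
        intro: sum.cong)
  also have "\<dots> = (\<Sum>i<n. \<Sum>j<m. (A $$ (i, j))\<^sup>2)"
    by (rule sum.swap)
  finally show ?thesis .
qed

lemma mult_mat_index_sum:
  assumes "A \<in> carrier_mat nr n" "B \<in> carrier_mat n nc" "i < nr" "j < nc"
  shows "(A * B) $$ (i, j) = (\<Sum>k<n. A $$ (i, k) * B $$ (k, j))"
  using assms by (auto simp: scalar_prod_def atLeast0LessThan)

lemma upper_triangular_mult:
  assumes A: "A \<in> carrier_mat n n" "upper_triangular A"
    and B: "B \<in> carrier_mat n n" "upper_triangular B"
  shows "upper_triangular (A * B)"
proof
  fix i j assume "j < i" "i < dim_row (A * B)"
  then have i: "i < n"
    using A by simp
  have "A $$ (i, k) * B $$ (k, j) = 0" if "k < n" for k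
  proof (cases "k < i")
    case True
    then show ?thesis
      using A i by (simp add: upper_triangularD)
  next
    case False
    then show ?thesis
      using B \<open>j < i\<close> that by (simp add: upper_triangularD)
  qed
  then show "(A * B) $$ (i, j) = 0"
    using mult_mat_index_sum[OF A(1) B(1) i, of j] \<open>j < i\<close> i by simp
qed

lemma upper_triangular_mult_diag:
  assumes A: "A \<in> carrier_mat n n" "upper_triangular A"
    and B: "B \<in> carrier_mat n n" "upper_triangular B"
    and i: "i < n"
  shows "(A * B) $$ (i, i) = A $$ (i, i) * B $$ (i, i)"
proof -
  have "(A * B) $$ (i, i) = (\<Sum>k<n. A $$ (i, k) * B $$ (k, i))"
    by (rule mult_mat_index_sum[OF A(1) B(1) i i])
  also have "\<dots> = (\<Sum>k<n. if k = i then A $$ (i, i) * B $$ (i, i) else 0)"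
  proof (rule sum.cong)
    fix k assume "k \<in> {..<n}"
    then show "A $$ (i, k) * B $$ (k, i) = (if k = i then A $$ (i, i) * B $$ (i, i) else 0)"
      using A B i by (cases k i rule: linorder_cases) (simp_all add: upper_triangularD)
  qed simp
  also have "\<dots> = A $$ (i, i) * B $$ (i, i)"
    using i by simp
  finally show ?thesis .
qed

lemma similar_mat_mult_self:
  assumes "similar_mat A B"
  shows "similar_mat (A * A) (B * B)"
proof -
  obtain P Q where wit: "similar_mat_wit A B P Q"
    using assms unfolding similar_mat_def by blast
  obtain n where "A \<in> carrier_mat n n" "B \<in> carrier_mat n n"
    using similar_mat_witD(4,5)[OF refl wit] by blast
  then have "A ^\<^sub>m 2 = A * A" "B ^\<^sub>m 2 = B * B"
    by (simp_all add: numeral_2_eq_2)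
  then show ?thesis
    using similar_mat_wit_pow[OF wit, of 2] unfolding similar_mat_def by auto
qed

lemma char_poly_and_trace_mult_self:
  fixes A :: "'a :: conjugatable_ordered_field mat"
  assumes A: "A \<in> carrier_mat n n" and split: "char_poly A = (\<Prod>e\<leftarrow>es. [:- e, 1:])"
  shows "char_poly (A * A) = (\<Prod>e\<leftarrow>es. [:- (e\<^sup>2), 1:])"
    and "mat_trace (A * A) = (\<Sum>e\<leftarrow>es. e\<^sup>2)"
proof -
  obtain T P Q where "schur_decomposition A es = (T, P, Q)"
    by (cases "schur_decomposition A es")
  with schur_decomposition[OF A split] have wit: "similar_mat_wit A T P Q"
    and ut: "upper_triangular T" and diag: "diag_mat T = es"
    by auto
  have T: "T \<in> carrier_mat n n"
    using similar_mat_witD2[OF A wit] by simp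
  have sim: "similar_mat (A * A) (T * T)"
    using wit by (intro similar_mat_mult_self) (auto simp: similar_mat_def)
  have TT: "T * T \<in> carrier_mat n n" "upper_triangular (T * T)"
    using T ut by (simp_all add: upper_triangular_mult[OF T ut T ut])
  have diag_TT: "diag_mat (T * T) = map (\<lambda>e. e\<^sup>2) es"
    using T diag
    by (auto simp: diag_mat_def upper_triangular_mult_diag[OF T ut T ut] power2_eq_square)
  show "char_poly (A * A) = (\<Prod>e\<leftarrow>es. [:- (e\<^sup>2), 1:])"
    using char_poly_similar[OF sim] char_poly_upper_triangular[OF TT] diag_TT
    by (simp add: comp_def)
  have "mat_trace (T * T) = sum_list (diag_mat (T * T))"
    using T
    by (simp add: mat_trace_def diag_mat_def interv_sum_list_conv_sum_set_nat atLeast0LessThan)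
  then show "mat_trace (A * A) = (\<Sum>e\<leftarrow>es. e\<^sup>2)"
    using mat_trace_similar[OF sim] diag_TT by (simp add: comp_def)
qed

interpretation of_real_poly_hom: map_poly_inj_idom_hom complex_of_real ..

lemma proots_prod_linear: "proots (\<Prod>r\<leftarrow>rs. [:- r, 1:]) = mset (rs :: 'a :: idom list)"
proof (induction rs)
  case (Cons r rs)
  have "(\<Prod>r\<leftarrow>rs. [:- r, 1:]) \<noteq> 0"
    by (auto simp: prod_list_zero_iff)
  then have "proots ([:- r, 1:] * (\<Prod>r\<leftarrow>rs. [:- r, 1:])) =
      proots [:- r, 1:] + proots (\<Prod>r\<leftarrow>rs. [:- r, 1:])"
    by (intro proots_mult) simp_all
  then show ?case
    using Cons by simp
qed simp

lemma real_symmetric_form_real: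
  fixes A :: "real mat" and v :: "complex vec"
  assumes A: "A \<in> carrier_mat n n" and sym: "transpose_mat A = A"
  shows "(\<Sum>i<n. \<Sum>j<n. cnj (v $ i) * of_real (A $$ (i, j)) * v $ j) \<in> \<real>"
proof -
  have A_sym: "A $$ (j, i) = A $$ (i, j)" if "i < n" "j < n" for i j
    using A that by (metis carrier_matD index_transpose_mat(1) sym)
  have "cnj (\<Sum>i<n. \<Sum>j<n. cnj (v $ i) * of_real (A $$ (i, j)) * v $ j) =
      (\<Sum>i<n. \<Sum>j<n. cnj (v $ j) * of_real (A $$ (j, i)) * v $ i)"
    unfolding cnj_sum
  proof (intro sum.cong refl)
    fix i j assume "i \<in> {..<n}" "j \<in> {..<n}"
    then have "A $$ (j, i) = A $$ (i, j)"
      by (simp add: A_sym)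
    then show "cnj (cnj (v $ i) * of_real (A $$ (i, j)) * v $ j) =
        cnj (v $ j) * of_real (A $$ (j, i)) * v $ i"
      by (metis complex_cnj_cnj complex_cnj_complex_of_real complex_cnj_mult
          mult.commute mult.left_commute)
  qed
  also have "\<dots> = (\<Sum>i<n. \<Sum>j<n. cnj (v $ i) * of_real (A $$ (i, j)) * v $ j)"
    by (rule sum.swap)
  finally show ?thesis
    by (simp add: Reals_cnj_iff)
qed

lemma real_symmetric_eigenvalue_real:
  fixes A :: "real mat"
  assumes A: "A \<in> carrier_mat n n" and sym: "transpose_mat A = A"
    and root: "poly (char_poly (map_mat complex_of_real A)) e = 0"
  shows "e \<in> \<real>"
proof -
  let ?A = "map_mat complex_of_real A"
  have "eigenvalue ?A e"
    using A root by (simp add: eigenvalue_root_char_poly[of _ n])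
  then obtain v where v: "v \<in> carrier_vec n" "v \<noteq> 0\<^sub>v n" and eigen: "?A *\<^sub>v v = e \<cdot>\<^sub>v v"
    using A unfolding eigenvalue_def eigenvector_def by auto
  have row: "(\<Sum>j<n. of_real (A $$ (i, j)) * v $ j) = e * v $ i" if "i < n" for i
    using arg_cong[OF eigen, of "\<lambda>w. w $ i"] A v that
    by (simp add: scalar_prod_def atLeast0LessThan)
  define w where "w = (\<Sum>i<n. (cmod (v $ i))\<^sup>2)"
  have "(\<Sum>i<n. \<Sum>j<n. cnj (v $ i) * of_real (A $$ (i, j)) * v $ j) =
      (\<Sum>i<n. cnj (v $ i) * (e * v $ i))"
    by (simp add: row mult.assoc sum_distrib_left[symmetric])
  also have "\<dots> = e * of_real w"
    unfolding w_def of_real_sum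
    by (simp add: sum_distrib_left complex_norm_square mult_ac del: of_real_power)
  finally have "e * of_real w \<in> \<real>"
    using real_symmetric_form_real[OF A sym, of v] by simp
  moreover have "w > 0"
  proof -
    obtain i where i: "i < n" "v $ i \<noteq> 0"
      using v by (metis carrier_vecD eq_vecI index_zero_vec)
    then have "0 < (cmod (v $ i))\<^sup>2"
      by simp
    also have "\<dots> \<le> w"
      unfolding w_def using i by (intro member_le_sum) auto
    finally show ?thesis .
  qed
  ultimately show ?thesis
    by (metis Reals_divide Reals_of_real nonzero_mult_div_cancel_right of_real_eq_0_iff less_irrefl)
qed

lemma real_symmetric_char_poly_split:
  fixes A :: "real mat"
  assumes A: "A \<in> carrier_mat n n" and sym: "transpose_mat A = A"
  obtains rs where "length rs = n" "char_poly A = (\<Prod>r\<leftarrow>rs. [:- r, 1:])"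
proof -
  obtain es where es: "char_poly (map_mat complex_of_real A) = (\<Prod>e\<leftarrow>es. [:- e, 1:])"
    and len: "length es = n"
    using char_poly_factorized[of "map_mat complex_of_real A" n] A by auto
  have real: "e \<in> \<real>" if "e \<in> set es" for e
    using that by (intro real_symmetric_eigenvalue_real[OF A sym])
      (auto simp: es poly_prod_list prod_list_zero_iff)
  define rs where "rs = map Re es"
  have "map (complex_of_real \<circ> Re) es = es"
    by (rule map_idI) (simp add: real)
  then have es_rs: "es = map complex_of_real rs"
    by (simp add: rs_def)
  have "map_poly complex_of_real (char_poly A) = map_poly complex_of_real (\<Prod>r\<leftarrow>rs. [:- r, 1:])"
    using es
    by (simp add: of_real_hom.char_poly_hom[OF A] of_real_poly_hom.hom_prod_list es_rs comp_def)
  then have "char_poly A = (\<Prod>r\<leftarrow>rs. [:- r, 1:])"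
    by simp
  moreover have "length rs = n"
    using len by (simp add: rs_def)
  ultimately show thesis
    using that by blast
qed

lemma real_symmetric_spectrum:
  fixes A :: "real mat"
  assumes A: "A \<in> carrier_mat n n" and sym: "transpose_mat A = A"
  shows "size (eigenvalues_mset A) = n"
    and "(\<Sum>\<^sub># (image_mset (\<lambda>r. r\<^sup>2) (eigenvalues_mset A))) = (\<Sum>i<n. \<Sum>j<n. (A $$ (i, j))\<^sup>2)"
    and "singular_values_mset A = image_mset abs (eigenvalues_mset A)"
proof -
  obtain rs where len: "length rs = n" and split: "char_poly A = (\<Prod>r\<leftarrow>rs. [:- r, 1:])"
    using real_symmetric_char_poly_split[OF A sym] .
  have eigen: "eigenvalues_mset A = mset rs"
    by (simp add: eigenvalues_mset_def split proots_prod_linear)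
  note square = char_poly_and_trace_mult_self[OF A split]
  show "size (eigenvalues_mset A) = n"
    by (simp add: eigen len)
  have "(\<Sum>\<^sub># (image_mset (\<lambda>r. r\<^sup>2) (eigenvalues_mset A))) = mat_trace (transpose_mat A * A)"
    by (simp add: eigen sym square(2) sum_mset_sum_list flip: mset_map)
  also have "\<dots> = (\<Sum>i<n. \<Sum>j<n. (A $$ (i, j))\<^sup>2)"
    by (rule mat_trace_transpose_mult_self[OF A])
  finally show "(\<Sum>\<^sub># (image_mset (\<lambda>r. r\<^sup>2) (eigenvalues_mset A))) = (\<Sum>i<n. \<Sum>j<n. (A $$ (i, j))\<^sup>2)" .
  have "proots (char_poly (transpose_mat A * A)) = mset (map (\<lambda>r. r\<^sup>2) rs)"
    using square(1) by (simp add: sym proots_prod_linear[symmetric] comp_def)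
  then show "singular_values_mset A = image_mset abs (eigenvalues_mset A)"
    by (simp add: singular_values_mset_def eigen multiset.map_comp comp_def)
qed

lemma transpose_smult_mat: "transpose_mat (c \<cdot>\<^sub>m A) = c \<cdot>\<^sub>m transpose_mat A"
  by (rule eq_matI) auto

section \<open>Spectral averages of test functions\<close>

lemma Cc_fun_bounded:
  assumes "Cc_fun F"
  obtains K where "\<And>t. norm (F t) \<le> K"
proof -
  obtain R where cont: "continuous_on UNIV F" and supp: "\<And>t. \<bar>t\<bar> > R \<Longrightarrow> F t = 0"
    using assms unfolding Cc_fun_def by blast
  have "continuous_on {-\<bar>R\<bar>..\<bar>R\<bar>} (\<lambda>t. norm (F t))"
    by (intro continuous_intros continuous_on_subset[OF cont]) auto
  then obtain t\<^sub>0 where K: "\<forall>t\<in>{-\<bar>R\<bar>..\<bar>R\<bar>}. norm (F t) \<le> norm (F t\<^sub>0)"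
    using continuous_attains_sup[of "{-\<bar>R\<bar>..\<bar>R\<bar>}" "\<lambda>t. norm (F t)"] by auto
  define K where "K = norm (F t\<^sub>0)"
  have "norm (F t) \<le> max K 0" for t
    using K supp[of t] unfolding K_def by (cases "\<bar>t\<bar> \<le> \<bar>R\<bar>") (auto simp: abs_le_iff)
  then show thesis
    using that by blast
qed

lemma deviation_le_quadratic:
  fixes F :: "real \<Rightarrow> 'a :: real_normed_vector"
  assumes bound: "\<And>t. norm (F t) \<le> K" and cont: "isCont F a" and "\<epsilon> > 0"
  obtains c where "\<And>t. norm (F t - F a) \<le> \<epsilon> + c * (t - a)\<^sup>2"
proof -
  obtain d where "d > 0" and near: "\<And>t. t \<noteq> a \<Longrightarrow> \<bar>t - a\<bar> < d \<Longrightarrow> norm (F t - F a) < \<epsilon>"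
    using LIM_D[OF cont[unfolded isCont_def] \<open>\<epsilon> > 0\<close>] by auto
  have "K \<ge> 0"
    using bound[of a] norm_ge_zero order_trans by blast
  define c where "c = 2 * K / d\<^sup>2"
  have "norm (F t - F a) \<le> \<epsilon> + c * (t - a)\<^sup>2" for t
  proof (cases "\<bar>t - a\<bar> < d")
    case True
    moreover have "c * (t - a)\<^sup>2 \<ge> 0"
      using \<open>K \<ge> 0\<close> by (simp add: c_def)
    ultimately show ?thesis
      using near[of t] \<open>\<epsilon> > 0\<close> by (cases "t = a") auto
  next
    case False
    then have "d\<^sup>2 \<le> (t - a)\<^sup>2"
      using \<open>d > 0\<close> by (metis abs_le_square_iff abs_of_pos not_less)
    then have "2 * K \<le> c * (t - a)\<^sup>2"
      using \<open>d > 0\<close> \<open>K \<ge> 0\<close> by (simp add: c_def field_simps mult_left_mono)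
    moreover have "norm (F t - F a) \<le> 2 * K"
      using norm_triangle_ineq4[of "F t" "F a"] bound[of t] bound[of a] by linarith
    ultimately show ?thesis
      using \<open>\<epsilon> > 0\<close> by linarith
  qed
  then show thesis
    using that by blast
qed

lemma norm_sum_mset_le: "norm (\<Sum>\<^sub># (image_mset f M)) \<le> \<Sum>\<^sub># (image_mset (\<lambda>x. norm (f x)) M)"
  by (induction M) (auto intro: order_trans[OF norm_triangle_ineq])

lemma sum_mset_minus_const:
  "\<Sum>\<^sub># (image_mset f M) - of_nat (size M) * c = \<Sum>\<^sub># (image_mset (\<lambda>x. f x - c) M)"
  for c :: "'a :: comm_ring_1"
  by (induction M) (simp_all add: algebra_simps)

lemma dist_mean_le:
  fixes F :: "real \<Rightarrow> 'a :: real_normed_field"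
  assumes nonempty: "M \<noteq> {#}" and dev: "\<And>t. norm (F t - F 0) \<le> e + c * t\<^sup>2"
  shows "dist (\<Sum>\<^sub># (image_mset F M) / of_nat (size M)) (F 0)
    \<le> e + c * (\<Sum>\<^sub># (image_mset (\<lambda>x. x\<^sup>2) M) / size M)"
proof -
  have "of_nat (size M) \<noteq> (0 :: 'a)"
    using nonempty by simp
  then have "\<Sum>\<^sub># (image_mset F M) / of_nat (size M) - F 0 =
      (\<Sum>\<^sub># (image_mset F M) - of_nat (size M) * F 0) / of_nat (size M)"
    by (simp add: diff_divide_distrib)
  then have "dist (\<Sum>\<^sub># (image_mset F M) / of_nat (size M)) (F 0) =
      norm (\<Sum>\<^sub># (image_mset (\<lambda>x. F x - F 0) M)) / size M"
    by (simp add: dist_norm norm_divide sum_mset_minus_const)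
  also have "\<dots> \<le> \<Sum>\<^sub># (image_mset (\<lambda>x. e + c * x\<^sup>2) M) / size M"
  proof (rule divide_right_mono)
    show "norm (\<Sum>\<^sub># (image_mset (\<lambda>x. F x - F 0) M)) \<le> \<Sum>\<^sub># (image_mset (\<lambda>x. e + c * x\<^sup>2) M)"
      using norm_sum_mset_le by (rule order_trans) (intro sum_mset_mono dev)
  qed simp
  also have "\<Sum>\<^sub># (image_mset (\<lambda>x. e + c * x\<^sup>2) M) =
      of_nat (size M) * e + c * \<Sum>\<^sub># (image_mset (\<lambda>x. x\<^sup>2) M)"
    by (simp only: sum_mset.distrib sum_mset_constant sum_mset_distrib_left)
  finally show ?thesis
    using nonempty by (simp add: add_divide_distrib)
qed

lemma mean_tendsto_of_mean_sq_tendsto_0: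
  fixes F :: "real \<Rightarrow> 'a :: real_normed_field" and M :: "nat \<Rightarrow> real multiset"
  assumes bound: "\<And>t. norm (F t) \<le> K" and cont: "isCont F 0"
    and nonempty: "\<And>n. M n \<noteq> {#}"
    and mean_sq: "(\<lambda>n. \<Sum>\<^sub># (image_mset (\<lambda>x. x\<^sup>2) (M n)) / size (M n)) \<longlonglongrightarrow> 0"
  shows "(\<lambda>n. \<Sum>\<^sub># (image_mset F (M n)) / of_nat (size (M n))) \<longlonglongrightarrow> F 0"
proof (rule tendstoI)
  fix \<epsilon> :: real assume "\<epsilon> > 0"
  then obtain c where dev: "\<And>t. norm (F t - F 0) \<le> \<epsilon> / 2 + c * t\<^sup>2"
    using deviation_le_quadratic[OF bound cont, of "\<epsilon> / 2"] by auto
  have "eventually (\<lambda>n. c * (\<Sum>\<^sub># (image_mset (\<lambda>x. x\<^sup>2) (M n)) / size (M n)) < \<epsilon> / 2) sequentially"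
    by (rule order_tendstoD(2)[OF tendsto_mult_right_zero[OF mean_sq]]) (use \<open>\<epsilon> > 0\<close> in simp)
  then show "eventually (\<lambda>n. dist (\<Sum>\<^sub># (image_mset F (M n)) / of_nat (size (M n))) (F 0) < \<epsilon>)
      sequentially"
  proof (rule eventually_mono)
    fix n
    assume "c * (\<Sum>\<^sub># (image_mset (\<lambda>x. x\<^sup>2) (M n)) / size (M n)) < \<epsilon> / 2"
    then show "dist (\<Sum>\<^sub># (image_mset F (M n)) / of_nat (size (M n))) (F 0) < \<epsilon>"
      using dist_mean_le[OF nonempty dev, of n] by linarith
  qed
qed

lemma Cc_fun_mean_tendsto:
  assumes "Cc_fun F" and "\<And>n. M n \<noteq> {#}"
    and "(\<lambda>n. (\<Sum>\<^sub># (image_mset (\<lambda>x. x\<^sup>2) (M n))) / size (M n)) \<longlonglongrightarrow> 0"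
  shows "(\<lambda>n. (\<Sum>\<^sub># (image_mset F (M n))) / of_nat (size (M n))) \<longlonglongrightarrow> F 0"
proof -
  obtain K where "\<And>t. norm (F t) \<le> K"
    using Cc_fun_bounded[OF assms(1)] by blast
  moreover have "isCont F 0"
    using assms(1) unfolding Cc_fun_def by (simp add: continuous_on_eq_continuous_at)
  ultimately show ?thesis
    using mean_tendsto_of_mean_sq_tendsto_0 assms(2,3) by blast
qed

section \<open>Matrix entries of the Curie-Weiss Hamiltonian\<close>

lemma bit_of_eq_of_bool: "bit_of i m = of_bool (bit i m)"
  unfolding bit_of_def by (simp add: bit_iff_odd odd_iff_mod_2_eq_one)

lemma nat_eq_iff_bits_below:
  fixes i j :: nat
  assumes "i < 2 ^ N" "j < 2 ^ N"
  shows "i = j \<longleftrightarrow> (\<forall>k<N. bit i k = bit j k)"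
  using assms by (metis bit_eq_iff bit_take_bit_iff take_bit_nat_eq_self)

lemma flip_bit_less_pow2:
  fixes i :: nat
  assumes "i < 2 ^ N" "k < N"
  shows "flip_bit k i < 2 ^ N"
  using assms by (metis take_bit_flip_bit_eq take_bit_nat_eq_self_iff not_le)

lemma flip_bit_flip_bit: "flip_bit k (flip_bit k i) = (i :: nat)"
  by (rule bit_eqI) (auto simp: bit_flip_bit_iff)

lemma pauli3_index:
  "a < 2 \<Longrightarrow> b < 2 \<Longrightarrow> pauli3 $$ (a, b) = (if a = b then (if a = 0 then 1 else -1) else 0)"
  unfolding pauli3_def mat_of_rows_list_def by (cases a; cases b) auto

lemma pauli1_index: "a < 2 \<Longrightarrow> b < 2 \<Longrightarrow> pauli1 $$ (a, b) = of_bool (a \<noteq> b)"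
  unfolding pauli1_def mat_of_rows_list_def by (cases a; cases b) auto

lemma prod_of_bool:
  "finite S \<Longrightarrow> (\<Prod>y\<in>S. of_bool (P y)) = (of_bool (\<forall>y\<in>S. P y) :: 'a :: comm_semiring_1)"
  by (induction rule: finite_induct) auto

definition agree_except :: "nat \<Rightarrow> nat \<Rightarrow> nat \<Rightarrow> nat \<Rightarrow> bool" where
  "agree_except N x i j \<longleftrightarrow> (\<forall>y\<in>{1..N} - {x}. bit_of i (y - 1) = bit_of j (y - 1))"

lemma sigma_at_index:
  assumes "x \<in> {1..N}" "i < 2 ^ N" "j < 2 ^ N"
  shows "sigma_at N x M $$ (i, j) =
    (if agree_except N x i j then M $$ (bit_of i (x - 1), bit_of j (x - 1)) else 0)"
proof -
  let ?f = "\<lambda>y. if y = x then M $$ (bit_of i (y - 1), bit_of j (y - 1))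
    else of_bool (bit_of i (y - 1) = bit_of j (y - 1))"
  have "sigma_at N x M $$ (i, j) = ?f x * (\<Prod>y\<in>{1..N} - {x}. ?f y)"
    using assms by (simp add: sigma_at_def prod.remove of_bool_def)
  also have "(\<Prod>y\<in>{1..N} - {x}. ?f y) =
      (\<Prod>y\<in>{1..N} - {x}. of_bool (bit_of i (y - 1) = bit_of j (y - 1)))"
    by (rule prod.cong) auto
  also have "(\<Prod>y\<in>{1..N} - {x}. of_bool (bit_of i (y - 1) = bit_of j (y - 1)) :: real)
      = of_bool (agree_except N x i j)"
    unfolding agree_except_def by (simp add: prod_of_bool)
  finally show ?thesis by simp
qed

lemma agree_except_eq_iff:
  assumes "x \<in> {1..N}" "i < 2 ^ N" "j < 2 ^ N"
  shows "agree_except N x i j \<and> bit_of i (x - 1) = bit_of j (x - 1) \<longleftrightarrow> i = j"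
proof
  assume agree: "agree_except N x i j \<and> bit_of i (x - 1) = bit_of j (x - 1)"
  have "bit_of i k = bit_of j k" if "k < N" for k
  proof (cases "Suc k = x")
    case False
    then have "Suc k \<in> {1..N} - {x}"
      using that by auto
    with agree have "bit_of i (Suc k - 1) = bit_of j (Suc k - 1)"
      unfolding agree_except_def by blast
    then show ?thesis by simp
  qed (use agree in auto)
  then show "i = j"
    using assms(2,3) by (metis nat_eq_iff_bits_below bit_of_eq_of_bool of_bool_eq_iff)
qed (simp add: agree_except_def)

definition spin :: "nat \<Rightarrow> nat \<Rightarrow> real" where
  "spin i k = (if bit i k then -1 else 1)"

lemma sigma_at_pauli3_index:
  assumes "x \<in> {1..N}" "i < 2 ^ N" "j < 2 ^ N"
  shows "sigma_at N x pauli3 $$ (i, j) = (if i = j then spin i (x - 1) else 0)"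
  using agree_except_eq_iff[OF assms]
  by (auto simp: sigma_at_index[OF assms] pauli3_index spin_def bit_of_eq_of_bool)

definition flips_at :: "nat \<Rightarrow> nat \<Rightarrow> nat \<Rightarrow> nat \<Rightarrow> bool" where
  "flips_at N x i j \<longleftrightarrow> agree_except N x i j \<and> bit_of i (x - 1) \<noteq> bit_of j (x - 1)"

lemma sigma_at_pauli1_index:
  assumes "x \<in> {1..N}" "i < 2 ^ N" "j < 2 ^ N"
  shows "sigma_at N x pauli1 $$ (i, j) = of_bool (flips_at N x i j)"
  by (auto simp: sigma_at_index[OF assms] pauli1_index flips_at_def bit_of_eq_of_bool)

lemma flips_at_sym: "flips_at N x i j \<longleftrightarrow> flips_at N x j i"
  unfolding flips_at_def agree_except_def by metis

lemma flips_at_unique_site: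
  assumes "flips_at N x i j" "flips_at N y i j" "y \<in> {1..N}"
  shows "x = y"
  using assms unfolding flips_at_def agree_except_def by (metis DiffI singletonD)

lemma flips_at_unique_target:
  assumes "x \<in> {1..N}" "j < 2 ^ N" "j' < 2 ^ N" "flips_at N x i j" "flips_at N x i j'"
  shows "j = j'"
proof -
  have "bit_of j (x - 1) = bit_of j' (x - 1)"
    using assms(4,5) unfolding flips_at_def bit_of_eq_of_bool
    by (cases "bit i (x - 1)"; cases "bit j (x - 1)"; cases "bit j' (x - 1)") auto
  moreover have "agree_except N x j j'"
    using assms(4,5) by (auto simp: flips_at_def agree_except_def)
  ultimately show ?thesis
    using agree_except_eq_iff[OF assms(1-3)] by blast
qed

definition magnetization :: "nat \<Rightarrow> nat \<Rightarrow> real" where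
  "magnetization N i = (\<Sum>x\<in>{1..N}. spin i (x - 1))"

definition hamming_adjacent :: "nat \<Rightarrow> nat \<Rightarrow> nat \<Rightarrow> bool" where
  "hamming_adjacent N i j \<longleftrightarrow> (\<exists>x\<in>{1..N}. flips_at N x i j)"

lemma hamming_adjacent_sym: "hamming_adjacent N i j \<longleftrightarrow> hamming_adjacent N j i"
  unfolding hamming_adjacent_def using flips_at_sym by blast

lemma not_hamming_adjacent_self: "\<not> hamming_adjacent N i i"
  by (simp add: hamming_adjacent_def flips_at_def)

lemma sum_flips_at:
  "(\<Sum>x\<in>{1..N}. of_bool (flips_at N x i j) :: real) = of_bool (hamming_adjacent N i j)"
proof (cases "hamming_adjacent N i j")
  case True
  then obtain x where "x \<in> {1..N}" "flips_at N x i j"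
    unfolding hamming_adjacent_def by blast
  then have "(\<Sum>y\<in>{1..N}. of_bool (flips_at N y i j) :: real) = (\<Sum>y\<in>{1..N}. of_bool (y = x))"
    by (intro sum.cong) (auto dest: flips_at_unique_site)
  then show ?thesis
    using True \<open>x \<in> {1..N}\<close> by (simp add: of_bool_def sum.delta)
next
  case False
  then show ?thesis by (simp add: hamming_adjacent_def)
qed

lemma sigma_at_pauli3_mult_index:
  assumes "x \<in> {1..N}" "y \<in> {1..N}" "i < 2 ^ N" "j < 2 ^ N"
  shows "(sigma_at N x pauli3 * sigma_at N y pauli3) $$ (i, j) =
    (if i = j then spin i (x - 1) * spin i (y - 1) else 0)"
proof -
  have "(sigma_at N x pauli3 * sigma_at N y pauli3) $$ (i, j) =
      (\<Sum>k<2 ^ N. sigma_at N x pauli3 $$ (i, k) * sigma_at N y pauli3 $$ (k, j))"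
    using assms by (simp add: sigma_at_def scalar_prod_def atLeast0LessThan)
  also have "\<dots> = (\<Sum>k<2 ^ N. if k = i
      then sigma_at N x pauli3 $$ (i, i) * sigma_at N y pauli3 $$ (i, j) else 0)"
    using assms by (intro sum.cong) (auto simp: sigma_at_pauli3_index)
  finally show ?thesis
    using assms by (simp add: sigma_at_pauli3_index)
qed

lemma H_CW_index:
  assumes "i < 2 ^ N" "j < 2 ^ N"
  shows "H_CW \<Gamma> B N $$ (i, j) =
    (if i = j then - \<Gamma> / (2 * real N) * (magnetization N i)\<^sup>2 else 0) -
    B * of_bool (hamming_adjacent N i j)"
proof -
  have interaction: "(\<Sum>x\<in>{1..N}. \<Sum>y\<in>{1..N}. (sigma_at N x pauli3 * sigma_at N y pauli3) $$ (i, j)) =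
      (if i = j then (magnetization N i)\<^sup>2 else 0)"
    using assms
    by (simp add: sigma_at_pauli3_mult_index magnetization_def power2_eq_square sum_product)
  have "(\<Sum>x\<in>{1..N}. sigma_at N x pauli1 $$ (i, j)) =
      (\<Sum>x\<in>{1..N}. of_bool (flips_at N x i j))"
    using assms by (intro sum.cong) (simp_all add: sigma_at_pauli1_index)
  also have "\<dots> = of_bool (hamming_adjacent N i j)"
    by (rule sum_flips_at)
  finally have field:
    "(\<Sum>x\<in>{1..N}. sigma_at N x pauli1 $$ (i, j)) = of_bool (hamming_adjacent N i j)" .
  show ?thesis
    using assms interaction field by (simp add: H_CW_def)
qed

lemma H_CW_carrier: "H_CW \<Gamma> B N \<in> carrier_mat (2 ^ N) (2 ^ N)"
  by (simp add: H_CW_def)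

lemma transpose_H_CW: "transpose_mat (H_CW \<Gamma> B N) = H_CW \<Gamma> B N"
  using H_CW_carrier[of \<Gamma> B N]
  by (intro eq_matI) (auto simp: H_CW_index hamming_adjacent_sym)

section \<open>The Frobenius norm of the Hamiltonian\<close>

lemma sum_spin_mult_spin:
  assumes "k < N" "l < N"
  shows "(\<Sum>i<2 ^ N. spin i k * spin i l) = (if k = l then 2 ^ N else 0)"
proof (cases "k = l")
  case True
  have "spin i k * spin i l = 1" for i
    using True by (simp add: spin_def)
  then show ?thesis
    using True by simp
next
  case False
  let ?f = "\<lambda>i. spin i k * spin i l"
  have "(\<Sum>i<2 ^ N. ?f i) = (\<Sum>i<2 ^ N. ?f (flip_bit k i))"
    by (rule sum.reindex_bij_witness[of _ "flip_bit k" "flip_bit k"])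
      (auto simp: flip_bit_less_pow2 assms flip_bit_flip_bit)
  also have "\<dots> = (\<Sum>i<2 ^ N. - ?f i)"
    using False by (intro sum.cong) (auto simp: spin_def bit_flip_bit_iff)
  finally show ?thesis
    using False by (simp add: sum_negf)
qed

lemma sum_magnetization_sq: "(\<Sum>i<2 ^ N. (magnetization N i)\<^sup>2) = real N * 2 ^ N"
proof -
  have "(\<Sum>i<2 ^ N. (magnetization N i)\<^sup>2) =
      (\<Sum>x\<in>{1..N}. \<Sum>y\<in>{1..N}. \<Sum>i<2 ^ N. spin i (x - 1) * spin i (y - 1))"
    unfolding magnetization_def power2_eq_square sum_product
    by (subst sum.swap) (intro sum.cong refl sum.swap)
  also have "\<dots> = (\<Sum>x\<in>{1..N}. \<Sum>y\<in>{1..N}. if x = y then 2 ^ N else 0)"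
    by (intro sum.cong refl) (auto simp: sum_spin_mult_spin)
  also have "\<dots> = real N * 2 ^ N"
    by simp
  finally show ?thesis .
qed

lemma abs_magnetization_le: "\<bar>magnetization N i\<bar> \<le> real N"
proof -
  have "\<bar>magnetization N i\<bar> \<le> (\<Sum>x\<in>{1..N}. \<bar>spin i (x - 1)\<bar>)"
    unfolding magnetization_def by (rule sum_abs)
  moreover have "\<bar>spin i k\<bar> = 1" for k
    by (simp add: spin_def)
  ultimately show ?thesis
    by simp
qed

lemma sum_magnetization_pow4_le: "(\<Sum>i<2 ^ N. (magnetization N i) ^ 4) \<le> real N ^ 3 * 2 ^ N"
proof -
  have "(magnetization N i) ^ 4 \<le> (real N)\<^sup>2 * (magnetization N i)\<^sup>2" for i
  proof -
    have "(magnetization N i)\<^sup>2 \<le> (real N)\<^sup>2"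
      using abs_magnetization_le[of N i] by (metis abs_ge_zero power2_abs power_mono)
    then have "(magnetization N i)\<^sup>2 * (magnetization N i)\<^sup>2 \<le> (real N)\<^sup>2 * (magnetization N i)\<^sup>2"
      by (rule mult_right_mono) simp
    then show ?thesis
      by (simp add: power4_eq_xxxx power2_eq_square mult.assoc)
  qed
  then have "(\<Sum>i<2 ^ N. (magnetization N i) ^ 4) \<le> (\<Sum>i<2 ^ N. (real N)\<^sup>2 * (magnetization N i)\<^sup>2)"
    by (rule sum_mono)
  also have "\<dots> = real N ^ 3 * 2 ^ N"
    unfolding sum_distrib_left[symmetric] sum_magnetization_sq
    by (simp add: power2_eq_square power3_eq_cube)
  finally show ?thesis .
qed

lemma sum_hamming_adjacent_le:
  "(\<Sum>i<2 ^ N. \<Sum>j<2 ^ N. of_bool (hamming_adjacent N i j) :: real) \<le> real N * 2 ^ N"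
proof -
  have flips_le_1: "(\<Sum>j<2 ^ N. of_bool (flips_at N x i j) :: real) \<le> 1" if "x \<in> {1..N}" for x i
  proof -
    have "card ({..<2 ^ N} \<inter> {j. flips_at N x i j}) \<le> Suc 0"
      using flips_at_unique_target[OF that] by (subst card_le_Suc0_iff_eq) auto
    then show ?thesis
      by (simp add: sum_of_bool_eq)
  qed
  have "(\<Sum>i<2 ^ N. \<Sum>j<2 ^ N. of_bool (hamming_adjacent N i j) :: real) =
      (\<Sum>i<2 ^ N. \<Sum>x\<in>{1..N}. \<Sum>j<2 ^ N. of_bool (flips_at N x i j))"
    unfolding sum_flips_at[symmetric] by (intro sum.cong refl sum.swap)
  also have "\<dots> \<le> (\<Sum>i<(2::nat) ^ N. \<Sum>x\<in>{1..N}. 1)"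
    by (intro sum_mono flips_le_1)
  also have "\<dots> = real N * 2 ^ N"
    by simp
  finally show ?thesis .
qed

lemma H_CW_index_sq:
  assumes "i < 2 ^ N" "j < 2 ^ N"
  shows "(H_CW \<Gamma> B N $$ (i, j))\<^sup>2 =
    (if i = j then (\<Gamma> / (2 * real N))\<^sup>2 * (magnetization N i) ^ 4 else 0) +
    B\<^sup>2 * of_bool (hamming_adjacent N i j)"
  using assms
  by (cases "i = j")
    (simp_all add: H_CW_index not_hamming_adjacent_self power_divide power_mult_distrib
      flip: power_mult)

lemma sum_sq_H_CW_le:
  assumes "N > 0"
  shows "(\<Sum>i<2 ^ N. \<Sum>j<2 ^ N. (H_CW \<Gamma> B N $$ (i, j))\<^sup>2) \<le> (\<Gamma>\<^sup>2 / 4 + B\<^sup>2) * real N * 2 ^ N"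
proof -
  have "(\<Sum>i<2 ^ N. \<Sum>j<2 ^ N. (H_CW \<Gamma> B N $$ (i, j))\<^sup>2) =
      (\<Gamma> / (2 * real N))\<^sup>2 * (\<Sum>i<2 ^ N. (magnetization N i) ^ 4) +
      B\<^sup>2 * (\<Sum>i<2 ^ N. \<Sum>j<2 ^ N. of_bool (hamming_adjacent N i j))"
    by (simp add: H_CW_index_sq sum.distrib sum_distrib_left del: sum_of_bool_eq)
  also have "\<dots> \<le> (\<Gamma> / (2 * real N))\<^sup>2 * (real N ^ 3 * 2 ^ N) + B\<^sup>2 * (real N * 2 ^ N)"
    by (intro add_mono mult_left_mono sum_magnetization_pow4_le sum_hamming_adjacent_le) simp_all
  also have "\<dots> = (\<Gamma>\<^sup>2 / 4 + B\<^sup>2) * real N * 2 ^ N"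
    using assms by (simp add: field_simps power2_eq_square power3_eq_cube)
  finally show ?thesis .
qed

lemma Hbar_CW_carrier: "Hbar_CW \<Gamma> B N \<in> carrier_mat (2 ^ N) (2 ^ N)"
  by (simp add: Hbar_CW_def H_CW_carrier)

lemma transpose_Hbar_CW: "transpose_mat (Hbar_CW \<Gamma> B N) = Hbar_CW \<Gamma> B N"
  unfolding Hbar_CW_def by (simp add: transpose_smult_mat transpose_H_CW)

lemma sum_sq_Hbar_CW_le:
  assumes "N > 0"
  shows "(\<Sum>i<2 ^ N. \<Sum>j<2 ^ N. (Hbar_CW \<Gamma> B N $$ (i, j))\<^sup>2) \<le> (\<Gamma>\<^sup>2 / 4 + B\<^sup>2) * 2 ^ N / real N"
proof -
  have "(\<Sum>i<2 ^ N. \<Sum>j<2 ^ N. (Hbar_CW \<Gamma> B N $$ (i, j))\<^sup>2) =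
      (\<Sum>i<2 ^ N. \<Sum>j<2 ^ N. (H_CW \<Gamma> B N $$ (i, j))\<^sup>2) / (real N)\<^sup>2"
    using H_CW_carrier[of \<Gamma> B N] by (simp add: Hbar_CW_def sum_divide_distrib power_divide)
  also have "\<dots> \<le> (\<Gamma>\<^sup>2 / 4 + B\<^sup>2) * real N * 2 ^ N / (real N)\<^sup>2"
    by (intro divide_right_mono sum_sq_H_CW_le assms) simp
  also have "\<dots> = (\<Gamma>\<^sup>2 / 4 + B\<^sup>2) * 2 ^ N / real N"
    using assms by (simp add: power2_eq_square)
  finally show ?thesis .
qed

lemma mean_sq_eigenvalues_Hbar_CW:
  "(\<lambda>n. \<Sum>\<^sub># (image_mset (\<lambda>x. x\<^sup>2) (eigenvalues_mset (Hbar_CW \<Gamma> B (Suc n))))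
      / size (eigenvalues_mset (Hbar_CW \<Gamma> B (Suc n)))) \<longlonglongrightarrow> 0"
  (is "?mean \<longlonglongrightarrow> 0")
proof (rule tendsto_0_le[where K = 1])
  note spectrum = real_symmetric_spectrum[OF Hbar_CW_carrier transpose_Hbar_CW]
  have "(\<Sum>i<2 ^ Suc n. \<Sum>j<2 ^ Suc n. (Hbar_CW \<Gamma> B (Suc n) $$ (i, j))\<^sup>2)
      \<le> (\<Gamma>\<^sup>2 / 4 + B\<^sup>2) * 2 ^ Suc n / real (Suc n)" for n
    by (rule sum_sq_Hbar_CW_le) simp
  then show "eventually (\<lambda>n. norm (?mean n) \<le> norm ((\<Gamma>\<^sup>2 / 4 + B\<^sup>2) / real (Suc n)) * 1)
      sequentially"
    by (simp add: spectrum sum_nonneg pos_divide_le_eq)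
  show "(\<lambda>n. (\<Gamma>\<^sup>2 / 4 + B\<^sup>2) / real (Suc n)) \<longlonglongrightarrow> 0"
    using LIMSEQ_Suc[OF lim_const_over_n] by simp
qed

theorem mainTheorem5:
  fixes \<Gamma> B :: real
  assumes "\<Gamma> > 0"
  shows "(\<forall>F. Cc_fun F \<longrightarrow>
           (\<lambda>n. (\<Sum>\<^sub># (image_mset F (eigenvalues_mset (Hbar_CW \<Gamma> B (Suc n)))))
                   / of_nat (2 ^ Suc n)) \<longlonglongrightarrow> F 0)
       \<and> (\<forall>F. Cc_fun F \<longrightarrow>
           (\<lambda>n. (\<Sum>\<^sub># (image_mset F (singular_values_mset (Hbar_CW \<Gamma> B (Suc n)))))
                   / of_nat (2 ^ Suc n)) \<longlonglongrightarrow> F 0)"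
proof -
  define ev where "ev n = eigenvalues_mset (Hbar_CW \<Gamma> B (Suc n))" for n
  note spectrum = real_symmetric_spectrum[OF Hbar_CW_carrier transpose_Hbar_CW]
  have size_ev: "size (ev n) = 2 ^ Suc n" for n
    by (simp add: ev_def spectrum)
  have nonempty: "ev n \<noteq> {#}" and nonempty_abs: "image_mset abs (ev n) \<noteq> {#}" for n
    using size_ev[of n] by auto
  have mean_sq: "(\<lambda>n. \<Sum>\<^sub># (image_mset (\<lambda>x. x\<^sup>2) (ev n)) / size (ev n)) \<longlonglongrightarrow> 0"
    unfolding ev_def by (rule mean_sq_eigenvalues_Hbar_CW)
  then have mean_sq_abs:
    "(\<lambda>n. \<Sum>\<^sub># (image_mset (\<lambda>x. x\<^sup>2) (image_mset abs (ev n))) / size (image_mset abs (ev n)))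
      \<longlonglongrightarrow> 0"
    by (simp add: multiset.map_comp comp_def)
  show ?thesis
    using Cc_fun_mean_tendsto[OF _ nonempty mean_sq] Cc_fun_mean_tendsto[OF _ nonempty_abs mean_sq_abs]
    by (simp add: size_ev spectrum flip: ev_def)
qed

end
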